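(* Fix any total budget $\mathrm{TB}\in\mathbb N_0$ and let $G$ be a number game. Then $G\ge 0$ if and only if $o(G,0)=\mathrm L$.
   Context: Game forms are defined recursively: $G=\{G^{\mathcal L}\mid G^{\mathcal R}\}$ with finite sets of Left and Right options, and finite birthday. $0=\{\varnothing\mid\varnothing\}$. Fix a total budget $\mathrm{TB}\in\mathbb N_0$. The budget set is $\mathcal B=\{0,\dots,\mathrm{TB},\hat 0,\dots,\widehat{\mathrm{TB}}\}$: state $p$ (resp. $\hat p$) means Left holds $p$ dollars and Right holds $\mathrm{TB}-p$, and Right (resp. Left) holds the tie-breaking marker. Play of $(G,\tilde p)$: at every position (terminal ones included) both players bid simultaneously, Left $\ell\in\{0,\dots,p\}$, Right $r\in\{0,\dots,\mathrm{TB}-p\}$. If Left holds the marker (state $\hat p$): if $\ell>r$ Left moves to $(G^L,\widehat{p-\ell})$, or, including the marker (allowed when $\ell\ge r$), to $(G^L,p-\ell)$; if $\ell=r$ Left wins, the marker passes to Right, play continues at $(G^L,p-\ell)$; if $\ell<r$ Right moves to $(G^R,\widehat{p+r})$. Symmetrically when Right holds the marker (state $p$): if $r>\ell$ Right moves to $(G^R,p+r)$ or, including the marker, to $(G^R,\widehat{p+r})$; if $r=\ell$ Right wins, the marker passes to Left, play continues at $(G^R,\widehat{p+r})$; if $r<\ell$ Left moves to $(G^L,p-\ell)$. A player who wins a bid but has no option loses. $o(G,\tilde p)\in\{\mathrm L,\mathrm R\}$ is the winner under optimal play; $\mathrm L>\mathrm R$. Disjunctive sum $G+H=\{G^{\mathcal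 L}+H,G+H^{\mathcal L}\mid G^{\mathcal R}+H,G+H^{\mathcal R}\}$. $G\ge H$ means $o(G+X,\tilde p)\ge o(H+X,\tilde p)$ for all game forms $X$ and all $\tilde p\in\mathcal B$; $G>H$ means $G\ge H$ and not $H\ge G$; $G<H$ means $H>G$. A game form $G$ is a number (for the fixed $\mathrm{TB}$) if all its options are numbers and $G^L<G<G^R$ for every $G^L\in G^{\mathcal L}$, $G^R\in G^{\mathcal R}$. *)

theory Defs
  imports Main "HOL-Library.FSet"
begin

datatype game = Game (lopts: "game fset") (ropts: "game fset")

definition zero_game :: game where
  "zero_game = Game {||} {||}"

text \<open>A state is a pair (p, m): Left holds p dollars, Right holds TB - p dollars,
and m = True means Left holds the tie-breaking marker (the state written p-hat),
m = False means Right holds the marker (the state written p).\<close>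
type_synonym bstate = "nat \<times> bool"

definition budgets :: "nat \<Rightarrow> bstate set" where
  "budgets TB = {(p, m). p \<le> TB}"

text \<open>FL / FR are the outcome functions (True = Left wins)
of the Left / Right options. lwin_bid TB FL FR (p,m) l r says: after Left bids l
and Right bids r, under optimal continuation, Left wins.\<close>
definition lwin_bid ::
  "nat \<Rightarrow> (bstate \<Rightarrow> bool) fset \<Rightarrow> (bstate \<Rightarrow> bool) fset \<Rightarrow> bstate \<Rightarrow> nat \<Rightarrow> nat \<Rightarrow> bool" where
  "lwin_bid TB FL FR s l r =
     (let p = fst s; m = snd s in
      if m then
        (if r < l then (\<exists>f. f |\<in>| FL \<and> (f (p - l, True) \<or> f (p - l, False)))
         else if l = r then (\<exists>f. f |\<in>| FL \<and> f (p - l, False))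
         else (\<forall>f. f |\<in>| FR \<longrightarrow> f (p + r, True)))
      else
        (if l < r then (\<forall>f. f |\<in>| FR \<longrightarrow> (f (p + r, False) \<and> f (p + r, True)))
         else if l = r then (\<forall>f. f |\<in>| FR \<longrightarrow> f (p + r, True))
         else (\<exists>f. f |\<in>| FL \<and> f (p - l, False))))"

definition lwins_step ::
  "nat \<Rightarrow> (bstate \<Rightarrow> bool) fset \<Rightarrow> (bstate \<Rightarrow> bool) fset \<Rightarrow> bstate \<Rightarrow> bool" where
  "lwins_step TB FL FR s =
     (\<exists>l \<le> fst s. \<forall>r \<le> TB - fst s. lwin_bid TB FL FR s l r)"

text \<open>outcome TB G s = True means o(G,s) = L, False means o(G,s) = R.\<close>
primrec outcome :: "nat \<Rightarrow> game \<Rightarrow> bstate \<Rightarrow> bool" where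
  "outcome TB (Game L R) = lwins_step TB (fimage (outcome TB) L) (fimage (outcome TB) R)"

primrec sum_aux ::
  "(game \<Rightarrow> game) fset \<Rightarrow> (game \<Rightarrow> game) fset \<Rightarrow> game \<Rightarrow> game" where
  "sum_aux SL SR (Game HL HR) =
     Game (fimage (\<lambda>s. s (Game HL HR)) SL |\<union>| fimage (sum_aux SL SR) HL)
          (fimage (\<lambda>s. s (Game HL HR)) SR |\<union>| fimage (sum_aux SL SR) HR)"

text \<open>gsum G H = G + H: the Left options are G^L + H and G + H^L, etc.\<close>
primrec gsum :: "game \<Rightarrow> game \<Rightarrow> game" where
  "gsum (Game GL GR) = sum_aux (fimage gsum GL) (fimage gsum GR)"

definition game_ge :: "nat \<Rightarrow> game \<Rightarrow> game \<Rightarrow> bool" where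
  "game_ge TB G H =
     (\<forall>X. \<forall>s \<in> budgets TB. outcome TB (gsum H X) s \<longrightarrow> outcome TB (gsum G X) s)"

definition game_gt :: "nat \<Rightarrow> game \<Rightarrow> game \<Rightarrow> bool" where
  "game_gt TB G H = (game_ge TB G H \<and> \<not> game_ge TB H G)"

inductive is_number :: "nat \<Rightarrow> game \<Rightarrow> bool" for TB where
  "(\<And>x. x |\<in>| L \<Longrightarrow> is_number TB x) \<Longrightarrow>
   (\<And>x. x |\<in>| R \<Longrightarrow> is_number TB x) \<Longrightarrow>
   (\<And>x. x |\<in>| L \<Longrightarrow> game_gt TB (Game L R) x) \<Longrightarrow>
   (\<And>y. y |\<in>| R \<Longrightarrow> game_gt TB y (Game L R)) \<Longrightarrow>
   is_number TB (Game L R)"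

lemma gsum_eq:
  "gsum (Game GL GR) (Game HL HR) =
     Game (fimage (\<lambda>g. gsum g (Game HL HR)) GL |\<union>| fimage (gsum (Game GL GR)) HL)
          (fimage (\<lambda>g. gsum g (Game HL HR)) GR |\<union>| fimage (gsum (Game GL GR)) HR)"
  by (simp add: fset.map_comp comp_def)

end

(*
  The zero game is a Left win at budget 0 when Right holds the marker: Right takes the tie
  but has no move. Conversely, let G be a number with o(G,0) = L. We show that G + X is a
  Left win at every state at which X is, by letting Left bid in G + X as she would in X.
  The only new Right replies are moves to G^R + X. Since G^R >= G, o(G^R,0) = L, and from
  budget 0 Right can force the play into some G^RL with o(G^RL,0) = L; by induction
  G^R >= 0 and G^RL >= 0, and G^RR >= G^R because G^R is a number. Against G^R + X Left
  then outbids Right just enough to move to G^RL + X at a budget at which she wins X (an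
  extra dollar never hurts Left and makes up for the marker); every Right reply leads to a
  position G^RR + X, which is no worse for Left than G^R + X at a higher budget, or to
  G^R + X^R, where X^R is a Left win because Left's original bid in X beat that reply.
*)
theory Submission
  imports Defs
begin

definition bid_wins :: "nat \<Rightarrow> game \<Rightarrow> nat \<Rightarrow> bool \<Rightarrow> nat \<Rightarrow> nat \<Rightarrow> bool" where
  "bid_wins TB G p m l r \<longleftrightarrow> lwin_bid TB (outcome TB |`| lopts G) (outcome TB |`| ropts G) (p, m) l r"

text \<open>Against Left's bid \<open>l\<close>, with Left holding the marker iff \<open>m\<close>, Right's bid \<open>r\<close> wins
  the bidding and Right's move may leave Left holding the marker iff \<open>n\<close>.\<close>
definition right_outbids :: "nat \<Rightarrow> bool \<Rightarrow> nat \<Rightarrow> bool \<Rightarrow> bool" where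
  "right_outbids l m r n \<longleftrightarrow> l < r \<and> (m \<longrightarrow> n) \<or> l = r \<and> \<not> m \<and> n"

lemma outcome_eq_bid_wins:
  "outcome TB G (p, m) \<longleftrightarrow> (\<exists>l\<le>p. \<forall>r\<le>TB - p. bid_wins TB G p m l r)"
  by (cases G) (simp add: lwins_step_def bid_wins_def)

lemma bid_wins_Left_takes:
  assumes "r < l \<or> r = l \<and> m"
  shows "bid_wins TB G p m l r \<longleftrightarrow>
    (\<exists>gl. gl |\<in>| lopts G \<and> (outcome TB gl (p - l, False) \<or> r < l \<and> m \<and> outcome TB gl (p - l, True)))"
  using assms by (auto simp: bid_wins_def lwin_bid_def)

lemma bid_wins_Right_takes:
  assumes "l < r \<or> l = r \<and> \<not> m"
  shows "bid_wins TB G p m l r \<longleftrightarrow>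
    (\<forall>gr n. gr |\<in>| ropts G \<longrightarrow> right_outbids l m r n \<longrightarrow> outcome TB gr (p + r, n))"
  using assms by (auto simp: bid_wins_def lwin_bid_def right_outbids_def all_bool_eq)

lemma bid_wins_transfer:
  assumes bid: "bid_wins TB X p m l r"
    and left: "\<And>x n. x |\<in>| lopts X \<Longrightarrow> outcome TB x (p - l, n) \<Longrightarrow> \<exists>y. y |\<in>| lopts Y \<and> outcome TB y (p - l, n)"
    and right: "\<And>y n. y |\<in>| ropts Y \<Longrightarrow> right_outbids l m r n \<Longrightarrow>
      (\<And>x. x |\<in>| ropts X \<Longrightarrow> outcome TB x (p + r, n)) \<Longrightarrow> outcome TB y (p + r, n)"
  shows "bid_wins TB Y p m l r"
proof (cases "r < l \<or> r = l \<and> m")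
  case True
  then show ?thesis
    using bid left by (simp add: bid_wins_Left_takes) metis
next
  case False
  then have "l < r \<or> l = r \<and> \<not> m" by auto
  then show ?thesis
    using bid right by (simp add: bid_wins_Right_takes)
qed

lemma outcome_by_bid:
  assumes "b \<le> q" "gl |\<in>| lopts G" "outcome TB gl (q - b, False)"
    and right: "\<And>gr r n'. gr |\<in>| ropts G \<Longrightarrow> r \<le> TB - q \<Longrightarrow> right_outbids b n r n' \<Longrightarrow>
      outcome TB gr (q + r, n')"
  shows "outcome TB G (q, n)"
proof -
  have "bid_wins TB G q n b r" if "r \<le> TB - q" for r
  proof (cases "r < b \<or> r = b \<and> n")
    case True
    then show ?thesis using assms(2,3) by (auto simp: bid_wins_Left_takes)
  next
    case False
    then have "b < r \<or> b = r \<and> \<not> n" by auto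
    then show ?thesis using right that by (simp add: bid_wins_Right_takes)
  qed
  then show ?thesis using \<open>b \<le> q\<close> by (auto simp: outcome_eq_bid_wins)
qed

lemma outcome_zero_game: "outcome TB zero_game (p, False)"
  by (auto simp: zero_game_def lwins_step_def lwin_bid_def intro!: exI[of _ 0])

lemma outcome_zero_budget_Right_marker:
  assumes "outcome TB G (0, False)" "g |\<in>| ropts G"
  shows "outcome TB g (0, True)"
proof -
  have "bid_wins TB G 0 False 0 0"
    using assms(1) by (simp add: outcome_eq_bid_wins)
  then show ?thesis
    using assms(2) by (simp add: bid_wins_Right_takes right_outbids_def ex_bool_eq)
qed

lemma outcome_zero_budget_Left_marker:
  assumes "outcome TB G (0, True)"
  obtains gl where "gl |\<in>| lopts G" "outcome TB gl (0, False)"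
proof -
  have "bid_wins TB G 0 True 0 0"
    using assms by (simp add: outcome_eq_bid_wins)
  then show ?thesis
    using that by (auto simp: bid_wins_Left_takes)
qed

lemma lopts_gsum: "lopts (gsum G X) = (\<lambda>g. gsum g X) |`| lopts G |\<union>| gsum G |`| lopts X"
  by (cases G; cases X) (simp only: gsum_eq game.sel)

lemma ropts_gsum: "ropts (gsum G X) = (\<lambda>g. gsum g X) |`| ropts G |\<union>| gsum G |`| ropts X"
  by (cases G; cases X) (simp only: gsum_eq game.sel)

lemma gsum_zero_left: "gsum zero_game X = X"
proof -
  have "sum_aux {||} {||} X = X"
    by (induction X) (auto intro: fset.map_ident_strong)
  then show ?thesis by (simp add: zero_game_def)
qed

lemma gsum_zero_right: "gsum G zero_game = G"
proof (induction G)
  case (Game L R)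
  then show ?case
    by (simp add: zero_game_def fset.map_ident_strong)
qed

lemma game_geD:
  "game_ge TB G H \<Longrightarrow> q \<le> TB \<Longrightarrow> outcome TB (gsum H X) (q, n) \<Longrightarrow> outcome TB (gsum G X) (q, n)"
  by (simp add: game_ge_def budgets_def)

lemma game_ge_zeroD:
  "game_ge TB G zero_game \<Longrightarrow> q \<le> TB \<Longrightarrow> outcome TB X (q, n) \<Longrightarrow> outcome TB (gsum G X) (q, n)"
  using game_geD[of TB G zero_game] by (simp add: gsum_zero_left)

lemma game_ge_zeroI:
  "(\<And>X q n. q \<le> TB \<Longrightarrow> outcome TB X (q, n) \<Longrightarrow> outcome TB (gsum G X) (q, n)) \<Longrightarrow>
    game_ge TB G zero_game"
  by (auto simp: game_ge_def budgets_def gsum_zero_left)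

lemma outcome_Suc_budget_same_marker:
  assumes opts: "\<And>x q m n. x |\<in>| lopts G |\<union>| ropts G \<Longrightarrow> Suc q \<le> TB \<Longrightarrow>
      outcome TB x (q, m) \<Longrightarrow> (n \<longrightarrow> m) \<Longrightarrow> outcome TB x (Suc q, n)"
    and "Suc p \<le> TB" "outcome TB G (p, m)"
  shows "outcome TB G (Suc p, m)"
proof -
  obtain l where l: "l \<le> p" "\<forall>r\<le>TB - p. bid_wins TB G p m l r"
    using assms(3) by (auto simp: outcome_eq_bid_wins)
  have "bid_wins TB G (Suc p) m l r" if r: "r \<le> TB - Suc p" for r
  proof (cases "r < l \<or> r = l \<and> m")
    case True
    have "bid_wins TB G p m l r"
      using l r by simp
    then obtain gl where "gl |\<in>| lopts G"
      "outcome TB gl (p - l, False) \<or> r < l \<and> m \<and> outcome TB gl (p - l, True)"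
      using True by (auto simp: bid_wins_Left_takes)
    then show ?thesis
      using True opts[of gl "p - l"] l(1) \<open>Suc p \<le> TB\<close> by (auto simp: bid_wins_Left_takes Suc_diff_le)
  next
    case False
    then have Right_takes: "l < r \<or> l = r \<and> \<not> m" by auto
    have "bid_wins TB G p m l r"
      using l r by simp
    then have "outcome TB gr (p + r, n)" if "gr |\<in>| ropts G" "right_outbids l m r n" for gr n
      using that Right_takes by (simp add: bid_wins_Right_takes)
    moreover have "Suc (p + r) \<le> TB"
      using r \<open>Suc p \<le> TB\<close> by linarith
    ultimately show ?thesis
      using Right_takes opts by (simp add: bid_wins_Right_takes) blast
  qed
  then show ?thesis
    using l(1) by (auto simp: outcome_eq_bid_wins intro!: exI[of _ l])
qed

lemma outcome_Suc_budget_drop_marker: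
  assumes opts: "\<And>x q m n. x |\<in>| lopts G |\<union>| ropts G \<Longrightarrow> Suc q \<le> TB \<Longrightarrow>
      outcome TB x (q, m) \<Longrightarrow> (n \<longrightarrow> m) \<Longrightarrow> outcome TB x (Suc q, n)"
    and "Suc p \<le> TB" "outcome TB G (p, True)"
  shows "outcome TB G (Suc p, False)"
proof -
  obtain l where l: "l \<le> p" "\<forall>r\<le>TB - p. bid_wins TB G p True l r"
    using assms(3) by (auto simp: outcome_eq_bid_wins)
  show ?thesis
  proof (cases "l \<le> TB - p")
    case True
    then have "bid_wins TB G p True l l"
      using l by simp
    then obtain gl where gl: "gl |\<in>| lopts G" "outcome TB gl (p - l, False)"
      by (auto simp: bid_wins_Left_takes)
    \<comment> \<open>Bidding \<open>Suc l\<close> without the marker wins the same bids as \<open>l\<close> with it.\<close>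
    have "bid_wins TB G (Suc p) False (Suc l) r" if r: "r \<le> TB - Suc p" for r
    proof (cases "r < Suc l")
      case True
      then show ?thesis using gl by (auto simp: bid_wins_Left_takes)
    next
      case False
      have "bid_wins TB G p True l r"
        using l r by simp
      then have "\<forall>gr. gr |\<in>| ropts G \<longrightarrow> outcome TB gr (p + r, True)"
        using False by (auto simp: bid_wins_Right_takes right_outbids_def)
      moreover have "Suc (p + r) \<le> TB"
        using r \<open>Suc p \<le> TB\<close> by linarith
      moreover have "Suc l < r \<or> Suc l = r \<and> \<not> False"
        using False by auto
      ultimately show ?thesis
        using opts by (simp add: bid_wins_Right_takes) blast
    qed
    then show ?thesis
      using l(1) by (auto simp: outcome_eq_bid_wins)
  next
    case False
    \<comment> \<open>Left's bid exceeds Right's whole budget, so Left moves whatever Right bids.\<close>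
    then have "bid_wins TB G p True l 0"
      using l by simp
    then obtain gl where gl: "gl |\<in>| lopts G" "outcome TB gl (p - l, False) \<or> outcome TB gl (p - l, True)"
      using False by (auto simp: bid_wins_Left_takes)
    then have "outcome TB gl (Suc (p - l), False)"
      using opts[of gl "p - l"] l(1) \<open>Suc p \<le> TB\<close> by auto
    then have "bid_wins TB G (Suc p) False l r" if "r \<le> TB - Suc p" for r
      using that False gl(1) l(1) by (auto simp: bid_wins_Left_takes Suc_diff_le)
    then show ?thesis
      using l(1) by (auto simp: outcome_eq_bid_wins intro!: exI[of _ l])
  qed
qed

lemma outcome_Suc_budget:
  "Suc p \<le> TB \<Longrightarrow> outcome TB G (p, m) \<Longrightarrow> (n \<longrightarrow> m) \<Longrightarrow> outcome TB G (Suc p, n)"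
proof (induction G arbitrary: p m n)
  case (Game L R)
  then have opts: "\<And>x q m n. x |\<in>| lopts (Game L R) |\<union>| ropts (Game L R) \<Longrightarrow> Suc q \<le> TB \<Longrightarrow>
      outcome TB x (q, m) \<Longrightarrow> (n \<longrightarrow> m) \<Longrightarrow> outcome TB x (Suc q, n)"
    by auto
  show ?case
  proof (cases "n = m")
    case True
    have "outcome TB (Game L R) (Suc p, m)"
      by (rule outcome_Suc_budget_same_marker[OF _ Game.prems(1,2)]) (rule opts)
    with True show ?thesis by simp
  next
    case False
    with Game.prems(3) have "m" "\<not> n" by auto
    have "outcome TB (Game L R) (Suc p, False)"
      by (rule outcome_Suc_budget_drop_marker[OF _ Game.prems(1)]) (use opts Game.prems(2) \<open>m\<close> in auto)
    with \<open>\<not> n\<close> show ?thesis by simp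
  qed
qed

lemma right_outbids_add:
  assumes "right_outbids l m r n" "right_outbids b n r' n'" "\<not> m \<Longrightarrow> b = r"
  shows "0 < r'" "right_outbids l m (r + r') n'"
  using assms by (auto simp: right_outbids_def)

lemma outcome_gsum_after_outbid:
  assumes K: "game_ge TB K zero_game" "kl |\<in>| lopts K" "game_ge TB kl zero_game"
      "\<And>kr. kr |\<in>| ropts K \<Longrightarrow> game_ge TB kr K"
    and bid: "p \<le> TB" "l \<le> p" "\<forall>r\<le>TB - p. bid_wins TB X p m l r"
  shows "r \<le> TB - p \<Longrightarrow> right_outbids l m r n \<Longrightarrow> outcome TB (gsum K X) (p + r, n)"
proof (induction "TB - p - r" arbitrary: r n rule: less_induct)
  case less
  have "outcome TB X (p, m)"
    using bid by (auto simp: outcome_eq_bid_wins)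
  define p' where "p' = (if m then Suc p else p)"
  have "p' \<le> p + r" "p' \<le> TB"
    using less.prems bid(1) by (auto simp: p'_def right_outbids_def)
  \<comment> \<open>Left answers by moving to \<open>kl + X\<close> at budget \<open>p'\<close>, where an extra dollar replaces the marker.\<close>
  have "outcome TB X (p', False)"
    using outcome_Suc_budget[of p TB X m False] \<open>p' \<le> TB\<close> \<open>outcome TB X (p, m)\<close>
    by (cases m) (auto simp: p'_def)
  then have kl_X: "outcome TB (gsum kl X) (p + r - (p + r - p'), False)"
    using game_ge_zeroD[OF K(3) \<open>p' \<le> TB\<close>] \<open>p' \<le> p + r\<close> by simp
  show ?case
  proof (rule outcome_by_bid[OF _ _ kl_X])
    show "gsum kl X |\<in>| lopts (gsum K X)"
      using K(2) by (simp add: lopts_gsum)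
  next
    fix y r' n'
    assume y: "y |\<in>| ropts (gsum K X)" "r' \<le> TB - (p + r)" "right_outbids (p + r - p') n r' n'"
    have r': "0 < r'" "right_outbids l m (r + r') n'"
      using right_outbids_add[OF less.prems(2) y(3)] by (auto simp: p'_def)
    have "r + r' \<le> TB - p" "p + (r + r') \<le> TB"
      using y(2) less.prems(1) bid(1) by linarith+
    from y(1) consider (move_in_K) kr where "kr |\<in>| ropts K" "y = gsum kr X"
      | (move_in_X) xr where "xr |\<in>| ropts X" "y = gsum K xr"
      by (auto simp: ropts_gsum)
    then show "outcome TB y (p + r + r', n')"
    proof cases
      case move_in_K
      have "outcome TB (gsum K X) (p + (r + r'), n')"
        using less.hyps[of "r + r'"] r' \<open>r + r' \<le> TB - p\<close> by auto
      then show ?thesis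
        using game_geD[OF K(4)[OF move_in_K(1)] \<open>p + (r + r') \<le> TB\<close>] move_in_K(2)
        by (simp add: add.assoc)
    next
      case move_in_X
      have "r + r' \<noteq> l \<or> \<not> m"
        using r' by (auto simp: right_outbids_def)
      then have "bid_wins TB X p m l (r + r')" "l < r + r' \<or> l = r + r' \<and> \<not> m"
        using bid \<open>r + r' \<le> TB - p\<close> r' by (auto simp: right_outbids_def)
      then have "outcome TB xr (p + (r + r'), n')"
        using move_in_X(1) r'(2) by (simp add: bid_wins_Right_takes)
      then show ?thesis
        using game_ge_zeroD[OF K(1) \<open>p + (r + r') \<le> TB\<close>] move_in_X(2) by (simp add: add.assoc)
    qed
  qed simp
qed

lemma ge_zero_if_ropts:
  assumes right: "\<And>g. g |\<in>| ropts G \<Longrightarrow> game_ge TB g zero_game \<and>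
      (\<exists>gl. gl |\<in>| lopts g \<and> game_ge TB gl zero_game) \<and> (\<forall>gr. gr |\<in>| ropts g \<longrightarrow> game_ge TB gr g)"
  shows "game_ge TB G zero_game"
proof (rule game_ge_zeroI)
  fix X q n
  show "q \<le> TB \<Longrightarrow> outcome TB X (q, n) \<Longrightarrow> outcome TB (gsum G X) (q, n)"
  proof (induction X arbitrary: q n)
    case (Game XL XR)
    \<comment> \<open>Left copies in \<open>G + X\<close> a winning bid of \<open>X\<close>.\<close>
    obtain l where l: "l \<le> q" "\<forall>r\<le>TB - q. bid_wins TB (Game XL XR) q n l r"
      using Game.prems(2) unfolding outcome_eq_bid_wins by blast
    have "bid_wins TB (gsum G (Game XL XR)) q n l r" if r: "r \<le> TB - q" for r
    proof (rule bid_wins_transfer)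
      show "bid_wins TB (Game XL XR) q n l r"
        using l r by simp
    next
      fix x n'
      assume "x |\<in>| lopts (Game XL XR)" "outcome TB x (q - l, n')"
      then show "\<exists>y. y |\<in>| lopts (gsum G (Game XL XR)) \<and> outcome TB y (q - l, n')"
        using Game.IH(1) Game.prems(1) by (auto simp: lopts_gsum)
    next
      fix y n'
      assume y: "y |\<in>| ropts (gsum G (Game XL XR))" "right_outbids l n r n'"
        and XR: "\<And>x. x |\<in>| ropts (Game XL XR) \<Longrightarrow> outcome TB x (q + r, n')"
      have "q + r \<le> TB"
        using r Game.prems(1) by linarith
      from y(1) consider (move_in_G) g where "g |\<in>| ropts G" "y = gsum g (Game XL XR)"
        | (move_in_X) xr where "xr |\<in>| XR" "y = gsum G xr"
        by (auto simp: ropts_gsum)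
      then show "outcome TB y (q + r, n')"
      proof cases
        case move_in_G
        then show ?thesis
          using right[OF move_in_G(1)] outcome_gsum_after_outbid Game.prems(1) l r y(2) by blast
      next
        case move_in_X
        then show ?thesis
          using Game.IH(2) XR \<open>q + r \<le> TB\<close> by simp
      qed
    qed
    then show ?case
      using l(1) by (auto simp: outcome_eq_bid_wins)
  qed
qed

lemma size_option_less:
  assumes "x |\<in>| lopts G \<or> x |\<in>| ropts G"
  shows "size x < size G"
proof (cases G)
  case (Game L R)
  have "Suc (size x) \<le> (\<Sum>y\<in>fset A. Suc (size y))" if "x |\<in>| A" for A :: "game fset"
    using that by (intro member_le_sum) auto
  then show ?thesis
    using assms by (fastforce simp: Game size_fset_overloaded_def)
qed

lemma number_optionD:
  assumes "is_number TB G"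
  shows "x |\<in>| lopts G \<or> x |\<in>| ropts G \<Longrightarrow> is_number TB x"
    and "gr |\<in>| ropts G \<Longrightarrow> game_ge TB gr G"
  using assms by (auto elim: is_number.cases simp: game_gt_def)

lemma number_ge_zero_if_outcome:
  "is_number TB G \<Longrightarrow> outcome TB G (0, False) \<Longrightarrow> game_ge TB G zero_game"
proof (induction G rule: measure_induct_rule[of size])
  case (less G)
  show ?case
  proof (rule ge_zero_if_ropts)
    fix g
    assume g: "g |\<in>| ropts G"
    have g_number: "is_number TB g" and "game_ge TB g G"
      using number_optionD[OF less.prems(1)] g by auto
    then have "outcome TB g (0, False)"
      using game_geD[of TB g G 0 zero_game] less.prems(2) by (simp add: gsum_zero_right)
    then have g_ge: "game_ge TB g zero_game"
      using less.IH g g_number size_option_less by blast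
    \<comment> \<open>With no money, Right can force the play into \<open>g\<close> at \<open>0\<close> with Left holding the marker.\<close>
    obtain gl where gl: "gl |\<in>| lopts g" "outcome TB gl (0, False)"
      using outcome_zero_budget_Left_marker outcome_zero_budget_Right_marker less.prems(2) g by blast
    have "size gl < size G"
      using size_option_less gl(1) g by (meson order.strict_trans)
    then have "game_ge TB gl zero_game"
      using less.IH gl number_optionD(1)[OF g_number] by blast
    then show "game_ge TB g zero_game \<and> (\<exists>gl. gl |\<in>| lopts g \<and> game_ge TB gl zero_game) \<and>
        (\<forall>gr. gr |\<in>| ropts g \<longrightarrow> game_ge TB gr g)"
      using g_ge gl(1) number_optionD(2)[OF g_number] by blast
  qed
qed

theorem mainTheorem2:
  fixes TB :: nat and G :: game
  assumes "is_number TB G"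
  shows "game_ge TB G zero_game \<longleftrightarrow> outcome TB G (0, False)"
proof
  assume "game_ge TB G zero_game"
  then show "outcome TB G (0, False)"
    using game_ge_zeroD[of TB G 0 zero_game False] outcome_zero_game by (simp add: gsum_zero_right)
next
  assume "outcome TB G (0, False)"
  then show "game_ge TB G zero_game"
    using number_ge_zero_if_outcome assms by blast
qed

end
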